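(* Let $0<\alpha,\beta<1$ satisfy $\beta>2-\frac1\alpha$ and $\alpha>2-\frac1\beta$, and let $S\subset\mathbb{R}$ be a Bernstein set. Then Schmidt's game with parameters $\alpha,\beta$ and target set $S$ is not determined, i.e., neither Alice nor Bob has a winning strategy.
   Context: A Bernstein set is a set $S\subset\mathbb{R}$ that has nonempty intersection with every closed uncountable subset of $\mathbb{R}$ but contains no closed uncountable subset of $\mathbb{R}$. Schmidt's game with parameters $0<\alpha,\beta<1$ and target set $S\subset\mathbb{R}$: Bob first chooses a compact interval $B_0$ of positive length. Alice then chooses a compact interval $A_0\subset B_0$ with $|A_0|=\alpha|B_0|$. Bob then chooses a compact interval $B_1\subset A_0$ with $|B_1|=\beta|A_0|$, and so on: $A_n\subset B_n$ with $|A_n|=\alpha|B_n|$ and $B_{n+1}\subset A_n$ with $|B_{n+1}|=\beta|A_n|$. Here $|I|$ is the length of the interval $I$. Alice wins if $\bigcap_{n\ge0}B_n$ has nonempty intersection with $S$; otherwise Bob wins. A strategy is a rule specifying a legal move for a player in every situation as a function of previously chosen intervals; it is winning if it guarantees that player wins regardless of the opponent's moves. The game is determined on $S$ if one of the players has a winning strategy, and not determined otherwise. *)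

theory Defs
  imports "HOL-Analysis.Analysis"
begin

type_synonym ivl = "real \<times> real"

definition ivl_set :: "ivl \<Rightarrow> real set" where
  "ivl_set I = {fst I .. snd I}"

definition ivl_len :: "ivl \<Rightarrow> real" where
  "ivl_len I = snd I - fst I"

definition legal_sub :: "real \<Rightarrow> ivl \<Rightarrow> ivl \<Rightarrow> bool" where
  "legal_sub c I J \<longleftrightarrow> fst I \<le> fst J \<and> snd J \<le> snd I \<and> ivl_len J = c * ivl_len I"

text \<open>Histories: the list [B_0, A_0, ..., B_n] (Alice to move) and [B_0, A_0, ..., B_n, A_n] (Bob to move).\<close>
definition hist_B :: "(nat \<Rightarrow> ivl) \<Rightarrow> (nat \<Rightarrow> ivl) \<Rightarrow> nat \<Rightarrow> ivl list" where
  "hist_B B A n = concat (map (\<lambda>i. [B i, A i]) [0..<n]) @ [B n]"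

definition hist_A :: "(nat \<Rightarrow> ivl) \<Rightarrow> (nat \<Rightarrow> ivl) \<Rightarrow> nat \<Rightarrow> ivl list" where
  "hist_A B A n = concat (map (\<lambda>i. [B i, A i]) [0..<n]) @ [B n, A n]"

definition legal_upto :: "real \<Rightarrow> real \<Rightarrow> (nat \<Rightarrow> ivl) \<Rightarrow> (nat \<Rightarrow> ivl) \<Rightarrow> nat \<Rightarrow> bool" where
  "legal_upto \<alpha> \<beta> B A n \<longleftrightarrow> ivl_len (B 0) > 0 \<and>
     (\<forall>k<n. legal_sub \<alpha> (B k) (A k) \<and> legal_sub \<beta> (A k) (B (Suc k)))"

definition legal_play :: "real \<Rightarrow> real \<Rightarrow> (nat \<Rightarrow> ivl) \<Rightarrow> (nat \<Rightarrow> ivl) \<Rightarrow> bool" where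
  "legal_play \<alpha> \<beta> B A \<longleftrightarrow> ivl_len (B 0) > 0 \<and>
     (\<forall>k. legal_sub \<alpha> (B k) (A k) \<and> legal_sub \<beta> (A k) (B (Suc k)))"

definition alice_wins_play :: "real set \<Rightarrow> (nat \<Rightarrow> ivl) \<Rightarrow> bool" where
  "alice_wins_play S B \<longleftrightarrow> (\<Inter>n. ivl_set (B n)) \<inter> S \<noteq> {}"

definition alice_strategy :: "real \<Rightarrow> real \<Rightarrow> (ivl list \<Rightarrow> ivl) \<Rightarrow> bool" where
  "alice_strategy \<alpha> \<beta> \<sigma> \<longleftrightarrow>
     (\<forall>B A n. legal_upto \<alpha> \<beta> B A n \<longrightarrow> legal_sub \<alpha> (B n) (\<sigma> (hist_B B A n)))"

text \<open>A strategy for Bob: the value at the empty history is B_0, and it gives a legal move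
  in every legal position where he is to move.\<close>
definition bob_strategy :: "real \<Rightarrow> real \<Rightarrow> (ivl list \<Rightarrow> ivl) \<Rightarrow> bool" where
  "bob_strategy \<alpha> \<beta> \<tau> \<longleftrightarrow> ivl_len (\<tau> []) > 0 \<and>
     (\<forall>B A n. legal_upto \<alpha> \<beta> B A n \<and> legal_sub \<alpha> (B n) (A n)
        \<longrightarrow> legal_sub \<beta> (A n) (\<tau> (hist_A B A n)))"

definition alice_winning :: "real \<Rightarrow> real \<Rightarrow> real set \<Rightarrow> (ivl list \<Rightarrow> ivl) \<Rightarrow> bool" where
  "alice_winning \<alpha> \<beta> S \<sigma> \<longleftrightarrow> alice_strategy \<alpha> \<beta> \<sigma> \<and>
     (\<forall>B A. legal_play \<alpha> \<beta> B A \<and> (\<forall>n. A n = \<sigma> (hist_B B A n)) \<longrightarrow> alice_wins_play S B)"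

definition bob_winning :: "real \<Rightarrow> real \<Rightarrow> real set \<Rightarrow> (ivl list \<Rightarrow> ivl) \<Rightarrow> bool" where
  "bob_winning \<alpha> \<beta> S \<tau> \<longleftrightarrow> bob_strategy \<alpha> \<beta> \<tau> \<and>
     (\<forall>B A. legal_play \<alpha> \<beta> B A \<and> B 0 = \<tau> [] \<and> (\<forall>n. B (Suc n) = \<tau> (hist_A B A n))
        \<longrightarrow> \<not> alice_wins_play S B)"

definition schmidt_determined :: "real \<Rightarrow> real \<Rightarrow> real set \<Rightarrow> bool" where
  "schmidt_determined \<alpha> \<beta> S \<longleftrightarrow> (\<exists>\<sigma>. alice_winning \<alpha> \<beta> S \<sigma>) \<or> (\<exists>\<tau>. bob_winning \<alpha> \<beta> S \<tau>)"

definition bernstein_set :: "real set \<Rightarrow> bool" where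
  "bernstein_set S \<longleftrightarrow> (\<forall>C. closed C \<and> uncountable C \<longrightarrow> C \<inter> S \<noteq> {} \<and> \<not> C \<subseteq> S)"

end

theory Submission
  imports Defs
begin

(*
  Fix a strategy of one player; let p be her ratio and q that of her opponent. Always answering
  with the leftmost or the rightmost admissible subinterval, the opponent can steer the play by
  any binary sequence b, pushing left or right during the k-th block of M moves according to b k.
  While he pushes left, the potential fst I + kappa * |I| with kappa = (1 - p) / (1 - p q) cannot
  increase, and symmetrically on the right; so if q (2 - p) < 1 and M is large, two plays that
  split in block k end in disjoint intervals. Hence the outcomes of these plays form a closed
  uncountable set, each point of which is the outcome of a play consistent with the fixed
  strategy. A Bernstein set and its complement both meet this set, so the strategy loses some
  play. The hypotheses on alpha and beta say q (2 - p) < 1 whichever player is fixed.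
*)

lemma uncountable_UNIV_nat_bool: "uncountable (UNIV :: (nat \<Rightarrow> bool) set)"
proof -
  have "(\<lambda>n. \<not> f n n) \<notin> range f" for f :: "nat \<Rightarrow> nat \<Rightarrow> bool"
  proof
    assume "(\<lambda>n. \<not> f n n) \<in> range f"
    then obtain m where "(\<lambda>n. \<not> f n n) = f m" by blast
    then show False by (metis (mono_tags))
  qed
  then show ?thesis
    unfolding uncountable_def by blast
qed

lemma obtain_first_difference:
  fixes b b' :: "nat \<Rightarrow> bool"
  assumes "b \<noteq> b'"
  obtains k where "\<forall>i<k. b i = b' i" "b k \<noteq> b' k"
proof
  define k where "k = (LEAST k. b k \<noteq> b' k)"
  from assms obtain j where "b j \<noteq> b' j" by auto
  then show "b k \<noteq> b' k" unfolding k_def by (rule LeastI)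
  show "\<forall>i<k. b i = b' i" unfolding k_def using not_less_Least by blast
qed

locale cantor_scheme =
  fixes T :: "(nat \<Rightarrow> bool) \<Rightarrow> nat \<Rightarrow> 'a::heine_borel set"
  assumes T_compact: "compact (T b n)"
    and T_nonempty: "T b n \<noteq> {}"
    and T_Suc_subset: "T b (Suc n) \<subseteq> T b n"
    and T_prefix: "\<forall>i<n. b i = b' i \<Longrightarrow> T b n = T b' n"
    and T_disjoint: "\<forall>i<k. b i = b' i \<Longrightarrow> b k \<noteq> b' k \<Longrightarrow> T b (Suc k) \<inter> T b' (Suc k) = {}"
begin

lemma T_antimono: "m \<le> n \<Longrightarrow> T b n \<subseteq> T b m"
  using lift_Suc_antimono_le[of "T b"] T_Suc_subset by blast

lemma closed_level: "closed (\<Union>b. T b n)"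
proof -
  have "(\<Union>b. T b n) = (\<Union>c \<in> (\<Pi>\<^sub>E i\<in>{..<n}. UNIV). T c n)"
  proof (intro equalityI subsetI)
    fix x assume "x \<in> (\<Union>b. T b n)"
    then obtain b where "x \<in> T b n" by blast
    moreover have "T b n = T (restrict b {..<n}) n"
      by (rule T_prefix) simp
    ultimately show "x \<in> (\<Union>c \<in> (\<Pi>\<^sub>E i\<in>{..<n}. UNIV). T c n)"
      by (intro UN_I[of "restrict b {..<n}"]) auto
  qed blast
  moreover have "finite (\<Pi>\<^sub>E i\<in>{..<n}. UNIV :: bool set)"
    by (simp add: finite_PiE)
  ultimately show ?thesis
    by (simp add: closed_UN compact_imp_closed T_compact)
qed

definition branch_point :: "(nat \<Rightarrow> bool) \<Rightarrow> 'a" where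
  "branch_point b = (SOME x. \<forall>n. x \<in> T b n)"

lemma branch_point_in: "branch_point b \<in> T b n"
proof -
  have "\<Inter>(range (T b)) \<noteq> {}"
    using T_compact T_nonempty T_antimono by (rule compact_nest)
  then have "\<exists>x. \<forall>n. x \<in> T b n"
    by blast
  then have "\<forall>n. branch_point b \<in> T b n"
    unfolding branch_point_def by (rule someI_ex)
  then show ?thesis ..
qed

lemma inj_branch_point: "inj branch_point"
proof (rule injI)
  fix b b'
  assume eq: "branch_point b = branch_point b'"
  show "b = b'"
  proof (rule ccontr)
    assume "b \<noteq> b'"
    then obtain k where "\<forall>i<k. b i = b' i" "b k \<noteq> b' k"
      by (rule obtain_first_difference)
    then have "T b (Suc k) \<inter> T b' (Suc k) = {}"
      by (rule T_disjoint)
    with eq show False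
      using branch_point_in[of b "Suc k"] branch_point_in[of b' "Suc k"] by auto
  qed
qed

lemma mem_some_branch:
  assumes "x \<in> (\<Inter>n. \<Union>b. T b n)"
  shows "\<exists>b. \<forall>n. x \<in> T b n"
proof -
  have "\<forall>n. \<exists>b. x \<in> T b n"
    using assms by blast
  then obtain c where c: "\<And>n. x \<in> T (c n) n"
    by metis
  have c_coherent: "c m i = c n i" if "i < m" "m \<le> n" for i m n
  proof (rule ccontr)
    assume "c m i \<noteq> c n i"
    then have "c m \<noteq> c n" by auto
    then obtain k where k: "\<forall>j<k. c m j = c n j" "c m k \<noteq> c n k"
      by (rule obtain_first_difference)
    have "k \<le> i"
      using k(1) \<open>c m i \<noteq> c n i\<close> by (meson not_le)
    then have "Suc k \<le> m" "Suc k \<le> n"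
      using that by auto
    then have "x \<in> T (c m) (Suc k)" "x \<in> T (c n) (Suc k)"
      using c T_antimono by blast+
    with k T_disjoint show False by blast
  qed
  have "x \<in> T (\<lambda>i. c (Suc i) i) n" for n
    using c[of n] T_prefix[of n "\<lambda>i. c (Suc i) i" "c n"] c_coherent by (simp add: Suc_leI)
  then show ?thesis by blast
qed

lemma closed_uncountable_branch_set:
  "\<exists>C. closed C \<and> uncountable C \<and> (\<forall>x\<in>C. \<exists>b. \<forall>n. x \<in> T b n)"
proof (intro exI conjI)
  let ?C = "\<Inter>n. \<Union>b. T b n"
  show "closed ?C"
    using closed_level by blast
  have "range branch_point \<subseteq> ?C"
    using branch_point_in by blast
  then show "uncountable ?C"
    using inj_branch_point uncountable_UNIV_nat_bool
    by (metis countable_image_inj_on countable_subset)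
  show "\<forall>x\<in>?C. \<exists>b. \<forall>n. x \<in> T b n"
    using mem_some_branch by blast
qed

end

definition end_subivl :: "real \<Rightarrow> bool \<Rightarrow> ivl \<Rightarrow> ivl" where
  "end_subivl c right K =
     (if right then (snd K - c * ivl_len K, snd K) else (fst K, fst K + c * ivl_len K))"

lemma ivl_len_end_subivl [simp]: "ivl_len (end_subivl c right K) = c * ivl_len K"
  by (simp add: end_subivl_def ivl_len_def)

lemma legal_sub_end_subivl:
  assumes "0 \<le> c" "c \<le> 1" "0 \<le> ivl_len K"
  shows "legal_sub c K (end_subivl c right K)"
proof -
  have "c * ivl_len K \<le> ivl_len K"
    using assms by (simp add: mult_left_le_one_le)
  then show ?thesis
    using assms unfolding legal_sub_def end_subivl_def ivl_len_def by auto
qed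

definition push_weight :: "real \<Rightarrow> real \<Rightarrow> real" where
  "push_weight p q = (1 - p) / (1 - p * q)"

lemma push_weight_fixpoint:
  assumes "p * q \<noteq> 1"
  shows "push_weight p q = (1 - p) + push_weight p q * (p * q)"
  using assms unfolding push_weight_def by (simp add: field_simps)

lemma exists_block_length:
  fixes p q :: real
  assumes "0 < p" "p < 1" "0 < q" "q * (2 - p) < 1"
  shows "\<exists>M\<ge>1. 2 * q * (push_weight p q + (1 - push_weight p q) * (p * q) ^ (M - 1)) < 1"
proof -
  define \<kappa> where "\<kappa> = push_weight p q"
  have pq: "0 < p * q" "p * q < 1"
    using assms by (simp, smt (verit) mult_less_cancel_right2)
  have "2 * q * (1 - p) < 1 - p * q"
    using assms(4) by (simp add: algebra_simps)
  then have "2 * q * \<kappa> < 1"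
    using pq unfolding \<kappa>_def push_weight_def by (simp add: field_simps)
  moreover have "(\<lambda>n. 2 * q * (\<kappa> + (1 - \<kappa>) * (p * q) ^ n)) \<longlonglongrightarrow> 2 * q * (\<kappa> + (1 - \<kappa>) * 0)"
    using pq by (intro tendsto_intros LIMSEQ_power_zero) simp
  ultimately have "\<forall>\<^sub>F n in sequentially. 2 * q * (\<kappa> + (1 - \<kappa>) * (p * q) ^ n) < 1"
    by (intro order_tendstoD(2)) simp_all
  then obtain n where "2 * q * (\<kappa> + (1 - \<kappa>) * (p * q) ^ n) < 1"
    using eventually_sequentially by auto
  then show ?thesis
    unfolding \<kappa>_def by (intro exI[of _ "Suc n"]) simp
qed

text \<open>The prober moves the intervals \<open>I b n\<close>, the opponent answers \<open>J b n\<close> by a strategy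
  (\<open>J_causal\<close>), and throughout the k-th block of M rounds the prober takes the left or the right
  end of the answer according to \<open>b k\<close>.\<close>

locale probe_scheme =
  fixes p q :: real and M :: nat and I J :: "(nat \<Rightarrow> bool) \<Rightarrow> nat \<Rightarrow> ivl" and I0 :: ivl
  assumes p_bounds: "0 < p" "p < 1" and q_bounds: "0 < q" "q < 1"
    and M_pos: "1 \<le> M"
    and block_bound: "2 * q * (push_weight p q + (1 - push_weight p q) * (p * q) ^ (M - 1)) < 1"
    and I_0: "I b 0 = I0" and I0_len: "0 < ivl_len I0"
    and J_legal: "legal_sub p (I b n) (J b n)"
    and I_Suc: "I b (Suc n) = end_subivl q (b (n div M)) (J b n)"
    and J_causal: "\<forall>k\<le>n. I b k = I b' k \<Longrightarrow> \<forall>k<n. J b k = J b' k \<Longrightarrow> J b n = J b' n"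
begin

lemma ivl_len_J: "ivl_len (J b n) = p * ivl_len (I b n)"
  using J_legal by (simp add: legal_sub_def)

lemma ivl_len_I: "ivl_len (I b n) = (p * q) ^ n * ivl_len I0"
  by (induction n) (simp_all add: I_0 I_Suc ivl_len_J)

lemma pq_less_1: "p * q < 1"
  using mult_strict_mono[of p 1 q 1] p_bounds q_bounds by simp

lemma ivl_len_I_pos: "0 < ivl_len (I b n)"
  using p_bounds q_bounds I0_len by (simp add: ivl_len_I)

lemma I_Suc_subset: "ivl_set (I b (Suc n)) \<subseteq> ivl_set (I b n)"
proof -
  have "0 \<le> ivl_len (J b n)"
    using ivl_len_I_pos[of b n] p_bounds by (simp add: ivl_len_J)
  then have "legal_sub q (J b n) (I b (Suc n))"
    using q_bounds by (simp add: I_Suc legal_sub_end_subivl)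
  with J_legal[of b n] show ?thesis
    by (auto simp: legal_sub_def ivl_set_def)
qed

lemma I_antimono: "m \<le> n \<Longrightarrow> ivl_set (I b n) \<subseteq> ivl_set (I b m)"
  using lift_Suc_antimono_le[of "\<lambda>n. ivl_set (I b n)"] I_Suc_subset by blast

lemma I_J_prefix:
  assumes "\<forall>i<k. b i = b' i" and "n \<le> k * M"
  shows "I b n = I b' n \<and> J b n = J b' n"
  using assms(2)
proof (induction n rule: less_induct)
  case (less n)
  have I_eq: "I b n = I b' n"
  proof (cases n)
    case (Suc m)
    then have "m div M < k"
      using less.prems M_pos by (simp add: div_less_iff_less_mult)
    with Suc less show ?thesis
      using assms(1) by (simp add: I_Suc)
  qed (simp add: I_0)
  moreover have "J b n = J b' n"
    by (rule J_causal) (use less I_eq in \<open>auto simp: le_less\<close>)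
  ultimately show ?case ..
qed

text \<open>\<open>push_weight p q\<close> solves \<open>\<kappa> = (1 - p) + \<kappa> p q\<close>: the opponent's best reply to a left push,
  the right end of \<open>I b n\<close>, leaves the left potential unchanged.\<close>

definition left_potential :: "(nat \<Rightarrow> bool) \<Rightarrow> nat \<Rightarrow> real" where
  "left_potential b n = fst (I b n) + push_weight p q * ivl_len (I b n)"

definition right_potential :: "(nat \<Rightarrow> bool) \<Rightarrow> nat \<Rightarrow> real" where
  "right_potential b n = snd (I b n) - push_weight p q * ivl_len (I b n)"

lemma push_weight_step: "push_weight p q * l = l - p * l + push_weight p q * (q * (p * l))"
proof -
  have "p * q \<noteq> 1"
    using pq_less_1 by simp
  then show ?thesis
    using arg_cong[OF push_weight_fixpoint, of p q "\<lambda>x. x * l"] by (simp add: algebra_simps)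
qed

lemma left_potential_Suc_le:
  assumes "\<not> b (n div M)"
  shows "left_potential b (Suc n) \<le> left_potential b n"
proof -
  have "fst (J b n) + p * ivl_len (I b n) \<le> fst (I b n) + ivl_len (I b n)"
    using J_legal[of b n] by (simp add: legal_sub_def ivl_len_def)
  moreover have "fst (I b (Suc n)) = fst (J b n)"
    using assms by (simp add: I_Suc end_subivl_def)
  ultimately show ?thesis
    unfolding left_potential_def I_Suc ivl_len_end_subivl ivl_len_J
    using push_weight_step[of "ivl_len (I b n)"] by (simp add: I_Suc[symmetric])
qed

lemma right_potential_le_Suc:
  assumes "b (n div M)"
  shows "right_potential b n \<le> right_potential b (Suc n)"
proof -
  have "snd (I b n) - ivl_len (I b n) \<le> snd (J b n) - p * ivl_len (I b n)"
    using J_legal[of b n] by (simp add: legal_sub_def ivl_len_def)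
  moreover have "snd (I b (Suc n)) = snd (J b n)"
    using assms by (simp add: I_Suc end_subivl_def)
  ultimately show ?thesis
    unfolding right_potential_def I_Suc ivl_len_end_subivl ivl_len_J
    using push_weight_step[of "ivl_len (I b n)"] by (simp add: I_Suc[symmetric])
qed

lemma left_potential_antimono:
  assumes "m \<le> n" and "\<And>j. m \<le> j \<Longrightarrow> j < n \<Longrightarrow> \<not> b (j div M)"
  shows "left_potential b n \<le> left_potential b m"
  using assms
proof (induction n rule: dec_induct)
  case (step n)
  then show ?case
    using left_potential_Suc_le[of b n] by fastforce
qed simp

lemma right_potential_mono:
  assumes "m \<le> n" and "\<And>j. m \<le> j \<Longrightarrow> j < n \<Longrightarrow> b (j div M)"
  shows "right_potential b m \<le> right_potential b n"
  using assms
proof (induction n rule: dec_induct)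
  case (step n)
  then show ?case
    using right_potential_le_Suc[of b n] by fastforce
qed simp

lemma I_block_separated:
  assumes prefix: "\<forall>i<k. b i = b' i" and dirs: "\<not> b k" "b' k"
    and x: "x \<in> ivl_set (I b (Suc k * M))" and y: "y \<in> ivl_set (I b' (Suc k * M))"
  shows "x < y"
proof -
  define n0 where "n0 = k * M"
  define N where "N = Suc k * M"
  define K where "K = J b n0"
  define L where "L = ivl_len K"
  define \<kappa> where "\<kappa> = push_weight p q"
  define t where "t = (p * q) ^ (M - 1)"
  have in_block: "j div M = k" if "n0 \<le> j" "j < N" for j
    using that by (intro div_nat_eqI) (auto simp: n0_def N_def mult.commute)
  have n0_N: "Suc n0 \<le> N" "N = Suc n0 + (M - 1)"
    using M_pos by (auto simp: n0_def N_def)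
  have "J b' n0 = K"
    using I_J_prefix[OF prefix, of n0] by (simp add: n0_def K_def)
  then have starts: "fst (I b (Suc n0)) = fst K" "snd (I b' (Suc n0)) = snd K"
    using dirs in_block[of n0] n0_N by (auto simp: I_Suc end_subivl_def K_def)
  have L_pos: "0 < L"
    using ivl_len_I_pos[of b n0] p_bounds by (simp add: L_def K_def ivl_len_J)
  have lens: "ivl_len (I c (Suc n0)) = q * L" "ivl_len (I c N) = t * (q * L)" for c
    using n0_N by (simp_all add: ivl_len_I L_def K_def t_def ivl_len_J power_add algebra_simps)
  have "left_potential b N \<le> left_potential b (Suc n0)"
    using n0_N dirs in_block by (intro left_potential_antimono) auto
  moreover have "x \<le> left_potential b N + (1 - \<kappa>) * ivl_len (I b N)"
    using x by (simp add: N_def left_potential_def ivl_set_def ivl_len_def \<kappa>_def algebra_simps)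
  ultimately have x_le: "x \<le> fst K + (\<kappa> * (q * L) + (1 - \<kappa>) * (t * (q * L)))"
    using lens starts by (simp add: left_potential_def \<kappa>_def)
  have "right_potential b' (Suc n0) \<le> right_potential b' N"
    using n0_N dirs in_block by (intro right_potential_mono) auto
  moreover have "right_potential b' N - (1 - \<kappa>) * ivl_len (I b' N) \<le> y"
    using y by (simp add: N_def right_potential_def ivl_set_def ivl_len_def \<kappa>_def algebra_simps)
  ultimately have le_y: "snd K - (\<kappa> * (q * L) + (1 - \<kappa>) * (t * (q * L))) \<le> y"
    using lens starts by (simp add: right_potential_def \<kappa>_def)
  have "L * (2 * q * (\<kappa> + (1 - \<kappa>) * t)) < L * 1"
    using block_bound L_pos unfolding \<kappa>_def t_def by (intro mult_strict_left_mono)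
  then have "2 * (\<kappa> * (q * L) + (1 - \<kappa>) * (t * (q * L))) < L"
    by (simp add: algebra_simps)
  with x_le le_y show ?thesis
    by (simp add: L_def ivl_len_def)
qed

lemma I_block_disjoint:
  assumes "\<forall>i<k. b i = b' i" and "b k \<noteq> b' k"
  shows "ivl_set (I b (Suc k * M)) \<inter> ivl_set (I b' (Suc k * M)) = {}"
  using assms I_block_separated[of k b b'] I_block_separated[of k b' b]
  by (cases "b k") fastforce+

sublocale cantor_scheme "\<lambda>b k. ivl_set (I b (k * M))"
proof
  show "compact (ivl_set (I b (n * M)))" for b n
    by (simp add: ivl_set_def)
  show "ivl_set (I b (n * M)) \<noteq> {}" for b n
    using ivl_len_I_pos[of b "n * M"] by (simp add: ivl_set_def ivl_len_def)
  show "ivl_set (I b (Suc n * M)) \<subseteq> ivl_set (I b (n * M))" for b n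
    by (rule I_antimono) simp
  show "ivl_set (I b (n * M)) = ivl_set (I b' (n * M))" if "\<forall>i<n. b i = b' i" for b b' n
    using I_J_prefix[OF that] by simp
qed (rule I_block_disjoint)

lemma closed_uncountable_set_of_branches:
  "\<exists>C. closed C \<and> uncountable C \<and> (\<forall>x\<in>C. \<exists>b. \<forall>n. x \<in> ivl_set (I b n))"
proof -
  have "n \<le> n * M" for n
    using M_pos by simp
  then have "(\<forall>k. x \<in> ivl_set (I b (k * M))) \<Longrightarrow> x \<in> ivl_set (I b n)" for x b n
    using I_antimono by blast
  then show ?thesis
    using closed_uncountable_branch_set by meson
qed

lemma branch_singleton:
  assumes "\<forall>n. x \<in> ivl_set (I b n)" and "\<forall>n. y \<in> ivl_set (I b n)"
  shows "x = y"
proof (rule ccontr)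
  assume "x \<noteq> y"
  have "0 < \<bar>x - y\<bar> / ivl_len I0"
    using \<open>x \<noteq> y\<close> I0_len by simp
  then obtain n where "(p * q) ^ n < \<bar>x - y\<bar> / ivl_len I0"
    using real_arch_pow_inv pq_less_1 by blast
  then have "(p * q) ^ n * ivl_len I0 < \<bar>x - y\<bar>"
    using I0_len by (simp add: pos_less_divide_eq)
  moreover have "\<bar>x - y\<bar> \<le> ivl_len (I b n)"
    using assms[rule_format, of n] by (auto simp: ivl_set_def ivl_len_def)
  ultimately show False
    by (simp add: ivl_len_I)
qed

end

lemma hist_B_0: "hist_B B A 0 = [B 0]"
  by (simp add: hist_B_def)

lemma hist_B_Suc: "hist_B B A (Suc n) = hist_B B A n @ [A n, B (Suc n)]"
  by (simp add: hist_B_def)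

lemma hist_A_eq_hist_B: "hist_A B A n = hist_B B A n @ [A n]"
  by (simp add: hist_B_def hist_A_def)

lemma hist_B_cong:
  "\<forall>k\<le>n. B k = B' k \<Longrightarrow> \<forall>k<n. A k = A' k \<Longrightarrow> hist_B B A n = hist_B B' A' n"
  by (induction n) (auto simp: hist_B_0 hist_B_Suc)

lemma hist_A_cong:
  "\<forall>k\<le>n. B k = B' k \<Longrightarrow> \<forall>k\<le>n. A k = A' k \<Longrightarrow> hist_A B A n = hist_A B' A' n"
  using hist_B_cong[of n B B' A A'] by (simp add: hist_A_eq_hist_B)

lemma legal_upto_Suc:
  "legal_upto \<alpha> \<beta> B A (Suc n) \<longleftrightarrow>
     legal_upto \<alpha> \<beta> B A n \<and> legal_sub \<alpha> (B n) (A n) \<and> legal_sub \<beta> (A n) (B (Suc n))"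
  by (auto simp: legal_upto_def less_Suc_eq)

lemma ivl_len_pos_if_legal_upto:
  "legal_upto \<alpha> \<beta> B A n \<Longrightarrow> 0 < \<alpha> \<Longrightarrow> 0 < \<beta> \<Longrightarrow> 0 < ivl_len (B n)"
  by (induction n) (auto simp: legal_upto_def legal_upto_Suc legal_sub_def)

lemma legal_play_if_legal_upto: "(\<And>n. legal_upto \<alpha> \<beta> B A n) \<Longrightarrow> legal_play \<alpha> \<beta> B A"
  unfolding legal_play_def by (metis legal_upto_Suc legal_upto_def)

fun alice_vs_rule_hist :: "(ivl list \<Rightarrow> ivl) \<Rightarrow> (nat \<Rightarrow> ivl \<Rightarrow> ivl) \<Rightarrow> ivl \<Rightarrow> nat \<Rightarrow> ivl list" where
  "alice_vs_rule_hist \<sigma> g B0 0 = [B0]"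
| "alice_vs_rule_hist \<sigma> g B0 (Suc n) =
     alice_vs_rule_hist \<sigma> g B0 n @
       [\<sigma> (alice_vs_rule_hist \<sigma> g B0 n), g n (\<sigma> (alice_vs_rule_hist \<sigma> g B0 n))]"

lemma alice_strategy_plays:
  assumes \<sigma>: "alice_strategy \<alpha> \<beta> \<sigma>" and "0 < \<alpha>" "0 < \<beta>" and "0 < ivl_len B0"
    and g: "\<And>i n K. 0 \<le> ivl_len K \<Longrightarrow> legal_sub \<beta> K (g i n K)"
  obtains B A where "\<And>i. legal_play \<alpha> \<beta> (B i) (A i)" "\<And>i. B i 0 = B0"
    "\<And>i n. A i n = \<sigma> (hist_B (B i) (A i) n)" "\<And>i n. B i (Suc n) = g i n (A i n)"
proof -
  define B where "B i n = last (alice_vs_rule_hist \<sigma> (g i) B0 n)" for i n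
  define A where "A i n = \<sigma> (alice_vs_rule_hist \<sigma> (g i) B0 n)" for i n
  have hist: "hist_B (B i) (A i) n = alice_vs_rule_hist \<sigma> (g i) B0 n" for i n
    by (induction n) (simp_all add: hist_B_0 hist_B_Suc B_def A_def)
  have B_Suc: "B i (Suc n) = g i n (A i n)" for i n
    by (simp add: B_def A_def)
  have A_eq: "A i n = \<sigma> (hist_B (B i) (A i) n)" for i n
    by (simp add: hist A_def)
  have "legal_upto \<alpha> \<beta> (B i) (A i) n" for i n
  proof (induction n)
    case 0
    then show ?case using \<open>0 < ivl_len B0\<close> by (simp add: legal_upto_def B_def)
  next
    case (Suc n)
    have A_legal: "legal_sub \<alpha> (B i n) (A i n)"
      using \<sigma> Suc A_eq unfolding alice_strategy_def by metis
    then have "0 \<le> ivl_len (A i n)"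
      using ivl_len_pos_if_legal_upto[OF Suc] assms(2,3) by (simp add: legal_sub_def)
    with Suc A_legal show ?case
      by (simp add: legal_upto_Suc B_Suc g)
  qed
  then have "legal_play \<alpha> \<beta> (B i) (A i)" for i
    by (intro legal_play_if_legal_upto)
  moreover have "B i 0 = B0" for i
    by (simp add: B_def)
  ultimately show thesis
    using that A_eq B_Suc by blast
qed

fun bob_vs_rule_hist :: "(ivl list \<Rightarrow> ivl) \<Rightarrow> (nat \<Rightarrow> ivl \<Rightarrow> ivl) \<Rightarrow> nat \<Rightarrow> ivl list" where
  "bob_vs_rule_hist \<tau> f 0 = [\<tau> []]"
| "bob_vs_rule_hist \<tau> f (Suc n) =
     bob_vs_rule_hist \<tau> f n @ [f n (last (bob_vs_rule_hist \<tau> f n)),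
       \<tau> (bob_vs_rule_hist \<tau> f n @ [f n (last (bob_vs_rule_hist \<tau> f n))])]"

lemma bob_strategy_plays:
  assumes \<tau>: "bob_strategy \<alpha> \<beta> \<tau>" and "0 < \<alpha>" "0 < \<beta>"
    and f: "\<And>i n K. 0 \<le> ivl_len K \<Longrightarrow> legal_sub \<alpha> K (f i n K)"
  obtains B A where "\<And>i. legal_play \<alpha> \<beta> (B i) (A i)" "\<And>i. B i 0 = \<tau> []"
    "\<And>i n. B i (Suc n) = \<tau> (hist_A (B i) (A i) n)" "\<And>i n. A i n = f i n (B i n)"
proof -
  define B where "B i n = last (bob_vs_rule_hist \<tau> (f i) n)" for i n
  define A where "A i n = f i n (B i n)" for i n
  have hist: "hist_B (B i) (A i) n = bob_vs_rule_hist \<tau> (f i) n" for i n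
    by (induction n) (simp_all add: hist_B_0 hist_B_Suc B_def A_def)
  have B_Suc: "B i (Suc n) = \<tau> (hist_A (B i) (A i) n)" for i n
    by (simp add: hist_A_eq_hist_B hist) (simp add: B_def A_def)
  have "legal_upto \<alpha> \<beta> (B i) (A i) n" for i n
  proof (induction n)
    case 0
    then show ?case using \<tau> by (simp add: legal_upto_def B_def bob_strategy_def)
  next
    case (Suc n)
    have A_legal: "legal_sub \<alpha> (B i n) (A i n)"
      using ivl_len_pos_if_legal_upto[OF Suc] assms(2,3) by (simp add: A_def f)
    then have "legal_sub \<beta> (A i n) (B i (Suc n))"
      using \<tau> Suc B_Suc unfolding bob_strategy_def by metis
    with Suc A_legal show ?case
      by (simp add: legal_upto_Suc)
  qed
  then have "legal_play \<alpha> \<beta> (B i) (A i)" for i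
    by (intro legal_play_if_legal_upto)
  moreover have "B i 0 = \<tau> []" for i
    by (simp add: B_def)
  ultimately show thesis
    using that B_Suc A_def by blast
qed

lemma alice_moves_causal:
  assumes A_eq: "\<And>i n. A i n = \<sigma> (hist_B (B i) (A i) n)"
    and "\<forall>k\<le>n. B i k = B j k" "\<forall>k<n. A i k = A j k"
  shows "A i n = A j n"
  using hist_B_cong[OF assms(2,3)] by (simp only: A_eq[of i n] A_eq[of j n])

lemma bob_moves_causal:
  assumes B_0: "\<And>i. B i 0 = \<tau> []" and B_Suc: "\<And>i n. B i (Suc n) = \<tau> (hist_A (B i) (A i) n)"
    and A_eq: "\<forall>k\<le>n. A i k = A j k" and B_eq: "\<forall>k<n. B i (Suc k) = B j (Suc k)"
  shows "B i (Suc n) = B j (Suc n)"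
proof -
  have "B i k = B j k" if "k \<le> n" for k
    using that B_eq B_0 by (cases k) auto
  then have "hist_A (B i) (A i) n = hist_A (B j) (A j) n"
    using A_eq by (intro hist_A_cong) auto
  then show ?thesis
    by (simp only: B_Suc)
qed

lemma alice_not_winning:
  assumes \<alpha>: "0 < \<alpha>" "\<alpha> < 1" and \<beta>: "0 < \<beta>" "\<beta> < 1" and "\<beta> * (2 - \<alpha>) < 1"
    and escapes: "\<And>C. closed C \<Longrightarrow> uncountable C \<Longrightarrow> \<not> C \<subseteq> S"
  shows "\<not> alice_winning \<alpha> \<beta> S \<sigma>"
proof
  assume win: "alice_winning \<alpha> \<beta> S \<sigma>"
  then have \<sigma>: "alice_strategy \<alpha> \<beta> \<sigma>"
    by (simp add: alice_winning_def)
  obtain M where M: "1 \<le> M"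
    "2 * \<beta> * (push_weight \<alpha> \<beta> + (1 - push_weight \<alpha> \<beta>) * (\<alpha> * \<beta>) ^ (M - 1)) < 1"
    using exists_block_length \<alpha> \<beta> assms(5) by blast
  obtain B A where play: "\<And>b. legal_play \<alpha> \<beta> (B b) (A b)" "\<And>b. B b 0 = (0, 1)"
    "\<And>b n. A b n = \<sigma> (hist_B (B b) (A b) n)"
    "\<And>b n. B b (Suc n) = end_subivl \<beta> (b (n div M)) (A b n)"
    by (rule alice_strategy_plays[where g = "\<lambda>b n. end_subivl \<beta> (b (n div M))", OF \<sigma> \<alpha>(1) \<beta>(1)])
      (use \<beta> in \<open>auto simp: ivl_len_def intro: legal_sub_end_subivl\<close>)
  interpret probe_scheme \<alpha> \<beta> M B A "(0, 1)"
  proof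
    show "A b n = A b' n" if "\<forall>k\<le>n. B b k = B b' k" "\<forall>k<n. A b k = A b' k" for b b' n
      by (rule alice_moves_causal[where A = A, OF play(3) that])
  qed (use \<alpha> \<beta> M play(1,2,4) in \<open>simp_all add: legal_play_def ivl_len_def\<close>)
  obtain C where C: "closed C" "uncountable C" "\<forall>x\<in>C. \<exists>b. \<forall>n. x \<in> ivl_set (B b n)"
    using closed_uncountable_set_of_branches by blast
  obtain x where "x \<in> C" "x \<notin> S"
    using escapes[OF C(1,2)] by blast
  then obtain b where x_branch: "\<forall>n. x \<in> ivl_set (B b n)"
    using C(3) by blast
  have "alice_wins_play S (B b)"
    using win play(1) play(3)[of b] unfolding alice_winning_def by blast
  then obtain y where "y \<in> S" "\<forall>n. y \<in> ivl_set (B b n)"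
    unfolding alice_wins_play_def by blast
  with \<open>x \<notin> S\<close> show False
    using branch_singleton[OF x_branch] by blast
qed

lemma bob_not_winning:
  assumes \<alpha>: "0 < \<alpha>" "\<alpha> < 1" and \<beta>: "0 < \<beta>" "\<beta> < 1" and "\<alpha> * (2 - \<beta>) < 1"
    and meets: "\<And>C. closed C \<Longrightarrow> uncountable C \<Longrightarrow> C \<inter> S \<noteq> {}"
  shows "\<not> bob_winning \<alpha> \<beta> S \<tau>"
proof
  assume win: "bob_winning \<alpha> \<beta> S \<tau>"
  then have \<tau>: "bob_strategy \<alpha> \<beta> \<tau>"
    by (simp add: bob_winning_def)
  obtain M where M: "1 \<le> M"
    "2 * \<alpha> * (push_weight \<beta> \<alpha> + (1 - push_weight \<beta> \<alpha>) * (\<beta> * \<alpha>) ^ (M - 1)) < 1"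
    using exists_block_length \<alpha> \<beta> assms(5) by blast
  obtain B A where play: "\<And>b. legal_play \<alpha> \<beta> (B b) (A b)" "\<And>b. B b 0 = \<tau> []"
    "\<And>b n. B b (Suc n) = \<tau> (hist_A (B b) (A b) n)"
    "\<And>b n. A b n = end_subivl \<alpha> (0 < n \<and> b ((n - 1) div M)) (B b n)"
    by (rule bob_strategy_plays[where f = "\<lambda>b n. end_subivl \<alpha> (0 < n \<and> b ((n - 1) div M))",
          OF \<tau> \<alpha>(1) \<beta>(1)])
      (use \<alpha> in \<open>auto intro: legal_sub_end_subivl\<close>)
  have "0 < ivl_len (\<tau> [])"
    using \<tau> by (simp add: bob_strategy_def)
  interpret probe_scheme \<beta> \<alpha> M A "\<lambda>b n. B b (Suc n)" "end_subivl \<alpha> False (\<tau> [])"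
  proof
    show "B b (Suc n) = B b' (Suc n)"
      if "\<forall>k\<le>n. A b k = A b' k" "\<forall>k<n. B b (Suc k) = B b' (Suc k)" for b b' n
      by (rule bob_moves_causal[where B = B, OF play(2,3) that])
  qed (use \<alpha> \<beta> M play(1,2,4) \<open>0 < ivl_len (\<tau> [])\<close> in \<open>simp_all add: legal_play_def\<close>)
  obtain C where C: "closed C" "uncountable C" "\<forall>x\<in>C. \<exists>b. \<forall>n. x \<in> ivl_set (A b n)"
    using closed_uncountable_set_of_branches by blast
  obtain x where "x \<in> C" "x \<in> S"
    using meets[OF C(1,2)] by blast
  then obtain b where x_branch: "\<forall>n. x \<in> ivl_set (A b n)"
    using C(3) by blast
  have "ivl_set (A b n) \<subseteq> ivl_set (B b n)" for n
    using play(1) by (auto simp: legal_play_def legal_sub_def ivl_set_def)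
  with x_branch \<open>x \<in> S\<close> have "alice_wins_play S (B b)"
    unfolding alice_wins_play_def by blast
  moreover have "\<not> alice_wins_play S (B b)"
    using win play(1,2) play(3)[of b] unfolding bob_winning_def by blast
  ultimately show False
    by contradiction
qed

theorem theorem3:
  fixes \<alpha> \<beta> :: real and S :: "real set"
  assumes "0 < \<alpha>" "\<alpha> < 1" "0 < \<beta>" "\<beta> < 1"
    and "\<beta> > 2 - 1 / \<alpha>" and "\<alpha> > 2 - 1 / \<beta>"
    and "bernstein_set S"
  shows "\<not> schmidt_determined \<alpha> \<beta> S"
proof -
  have "\<beta> * (2 - \<alpha>) < 1" "\<alpha> * (2 - \<beta>) < 1"
    using assms(1,3,5,6) by (simp_all add: field_simps)
  moreover have "\<not> C \<subseteq> S" "C \<inter> S \<noteq> {}" if "closed C" "uncountable C" for C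
    using assms(7) that unfolding bernstein_set_def by blast+
  ultimately have "\<not> alice_winning \<alpha> \<beta> S \<sigma>" "\<not> bob_winning \<alpha> \<beta> S \<tau>" for \<sigma> \<tau>
    using alice_not_winning bob_not_winning assms(1-4) by simp_all
  then show ?thesis
    unfolding schmidt_determined_def by blast
qed

end
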